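(* Let $\mathrm X$ be the Cantor set (a compact, totally disconnected metric space with no isolated points), let $\mathrm G$ be a countable discrete group, and let $\theta=(\{\mathrm X_t\}_{t\in\mathrm G},\{h_t\}_{t\in\mathrm G})$ be a topological partial action of $\mathrm G$ on $\mathrm X$ such that $\mathrm X_t$ is clopen for every $t\in\mathrm G$. Then the envelope space $\mathrm X^e$ is a locally compact Cantor set: it is Hausdorff, locally compact, has a countable basis consisting of clopen sets, and has no isolated points.
   Context: A (topological) partial action of a group $\mathrm G$ on a topological space $\mathrm X$ is a pair $\theta=(\{\mathrm X_t\}_{t\in\mathrm G},\{h_t\}_{t\in\mathrm G})$ where each $\mathrm X_t$ is an open subset of $\mathrm X$ and each $h_t:\mathrm X_{t^{-1}}\to\mathrm X_t$ is a homeomorphism, such that: (1) $\mathrm X_e=\mathrm X$ and $h_e=\mathrm{id}_{\mathrm X}$; (2) $h_t(\mathrm X_{t^{-1}}\cap\mathrm X_s)=\mathrm X_t\cap\mathrm X_{ts}$ for all $s,t$; (3) $h_t(h_s(x))=h_{ts}(x)$ for all $x\in\mathrm X_{s^{-1}}\cap\mathrm X_{s^{-1}t^{-1}}$. The envelope space $\mathrm X^e$ is the topological quotient of $\mathrm G\times\mathrm X$ ($\mathrm G$ discrete, product topology) by the equivalence relation $(r,x)\sim(s,y)\iff x\in\mathrm X_{r^{-1}s}$ and $h_{s^{-1}r}(x)=y$. *)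

theory Defs
  imports "HOL-Analysis.Analysis" "HOL-Algebra.Group"
begin

definition totally_disconnected_space :: "'a topology \<Rightarrow> bool" where
  "totally_disconnected_space X \<longleftrightarrow>
     (\<forall>S. connectedin X S \<longrightarrow> (\<exists>a. S \<subseteq> {a}))"

definition partial_action ::
  "('g, 'm) monoid_scheme \<Rightarrow> 'a topology \<Rightarrow> ('g \<Rightarrow> 'a set) \<Rightarrow> ('g \<Rightarrow> 'a \<Rightarrow> 'a) \<Rightarrow> bool" where
  "partial_action G X Xd h \<longleftrightarrow>
     (\<forall>t\<in>carrier G. openin X (Xd t)) \<and>
     (\<forall>t\<in>carrier G. homeomorphic_map (subtopology X (Xd (inv\<^bsub>G\<^esub> t))) (subtopology X (Xd t)) (h t)) \<and>
     Xd \<one>\<^bsub>G\<^esub> = topspace X \<and>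
     (\<forall>x\<in>topspace X. h \<one>\<^bsub>G\<^esub> x = x) \<and>
     (\<forall>s\<in>carrier G. \<forall>t\<in>carrier G.
        h t ` (Xd (inv\<^bsub>G\<^esub> t) \<inter> Xd s) = Xd t \<inter> Xd (t \<otimes>\<^bsub>G\<^esub> s)) \<and>
     (\<forall>s\<in>carrier G. \<forall>t\<in>carrier G. \<forall>x.
        x \<in> Xd (inv\<^bsub>G\<^esub> s) \<inter> Xd (inv\<^bsub>G\<^esub> s \<otimes>\<^bsub>G\<^esub> inv\<^bsub>G\<^esub> t) \<longrightarrow>
        h t (h s x) = h (t \<otimes>\<^bsub>G\<^esub> s) x)"

definition envelope_rel ::
  "('g, 'm) monoid_scheme \<Rightarrow> 'a topology \<Rightarrow> ('g \<Rightarrow> 'a set) \<Rightarrow> ('g \<Rightarrow> 'a \<Rightarrow> 'a) \<Rightarrow> (('g \<times> 'a) \<times> ('g \<times> 'a)) set" where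
  "envelope_rel G X Xd h =
     {((r, x), (s, y)). r \<in> carrier G \<and> s \<in> carrier G \<and> x \<in> topspace X \<and> y \<in> topspace X \<and>
        x \<in> Xd (inv\<^bsub>G\<^esub> r \<otimes>\<^bsub>G\<^esub> s) \<and> h (inv\<^bsub>G\<^esub> s \<otimes>\<^bsub>G\<^esub> r) x = y}"

definition envelope_pre_topology ::
  "('g, 'm) monoid_scheme \<Rightarrow> 'a topology \<Rightarrow> ('g \<times> 'a) topology" where
  "envelope_pre_topology G X = prod_topology (discrete_topology (carrier G)) X"

text \<open>The envelope space X^e: the quotient topology of G x X by the relation above.
  Points are equivalence classes; a set of classes is open iff the union of its
  members (= its preimage under the quotient map) is open in G x X.\<close>
definition envelope_topology ::
  "('g, 'm) monoid_scheme \<Rightarrow> 'a topology \<Rightarrow> ('g \<Rightarrow> 'a set) \<Rightarrow> ('g \<Rightarrow> 'a \<Rightarrow> 'a) \<Rightarrow> ('g \<times> 'a) set topology" where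
  "envelope_topology G X Xd h =
     topology (\<lambda>U. U \<subseteq> (carrier G \<times> topspace X) // envelope_rel G X Xd h \<and>
        openin (envelope_pre_topology G X)
          {p \<in> carrier G \<times> topspace X. envelope_rel G X Xd h `` {p} \<in> U})"

end

theory Submission
  imports Defs
begin

text \<open>
  First, general topology of the base space: a compact
  metrizable space is second countable, a compact Hausdorff totally disconnected
  space has arbitrarily small clopen neighbourhoods, and together these give a
  countable base of clopen sets for \<open>X\<close>.

  The canonical maps
  \<open>\<iota>_g : X \<rightarrow> X\<^sup>e\<close>, \<open>x \<mapsto> [g, x]\<close> (\<open>incl g\<close> below), cover \<open>X\<^sup>e\<close>, and the topology of \<open>X\<^sup>e\<close> is the
  final topology of this family. Because the domains \<open>X_t\<close> are clopen, the trace of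
  \<open>\<iota>_g(W)\<close> on each copy of \<open>X\<close> is open (closed) whenever \<open>W\<close> is, so every \<open>\<iota>_g\<close>
  is an open and closed embedding. Each of the four properties of \<open>X\<^sup>e\<close> is then
  inherited from \<open>X\<close> along these countably many embeddings; this part is developed
  in the locale \<open>clopen_partial_action\<close>, and the theorem combines the two halves.
\<close>

text \<open>A compact metrizable space has a countable base: the balls of radius
  \<open>1/(n+1)\<close> around the points of finite \<open>1/(n+1)\<close>-nets, \<open>n \<in> \<nat>\<close>.\<close>
lemma compact_metrizable_imp_second_countable:
  assumes "metrizable_space X" and "compact_space X"
  shows "second_countable X"
proof -
  obtain M d where "Metric_space M d" and X: "X = Metric_space.mtopology M d"
    using assms(1) unfolding metrizable_space_def by blast
  interpret Metric_space M d by fact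
  have "mtotally_bounded M"
    using assms(2) compactin_imp_mtotally_bounded unfolding X compact_space_def by simp
  then have "\<forall>n::nat. \<exists>K. finite K \<and> K \<subseteq> M \<and> M \<subseteq> (\<Union>c\<in>K. mball c (1 / Suc n))"
    unfolding mtotally_bounded_def by simp
  then obtain K where K: "\<And>n. finite (K n) \<and> K n \<subseteq> M \<and> M \<subseteq> (\<Union>c\<in>K n. mball c (1 / Suc n))"
    by (metis choice)
  define \<B> where "\<B> = (\<Union>n. (\<lambda>c. mball c (1 / Suc n)) ` K n)"
  have "countable \<B>"
    unfolding \<B>_def using K by (intro countable_UN) (auto intro: countable_finite)
  moreover have "\<forall>V\<in>\<B>. openin mtopology V" unfolding \<B>_def by auto
  moreover have "\<exists>V\<in>\<B>. x \<in> V \<and> V \<subseteq> U" if U: "openin mtopology U" and "x \<in> U" for U x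
  proof -
    obtain r where "r > 0" and r: "mball x r \<subseteq> U"
      using U \<open>x \<in> U\<close> openin_mtopology by meson
    have "x \<in> M" using U \<open>x \<in> U\<close> openin_mtopology by blast
    obtain n :: nat where n: "inverse (real (Suc n)) < r / 2"
      using reals_Archimedean[of "r/2"] \<open>r > 0\<close> by auto
    obtain c where c: "c \<in> K n" "x \<in> mball c (1 / Suc n)"
      using K \<open>x \<in> M\<close> by blast
    have "mball c (1 / Suc n) \<subseteq> mball x r"
    proof (rule mball_subset)
      show "d c x + 1 / real (Suc n) \<le> r" using c n by (simp add: field_simps)
    qed fact
    then show ?thesis using c r unfolding \<B>_def by blast
  qed
  ultimately show ?thesis unfolding X second_countable_def by blast
qed

text \<open>In a locally compact Hausdorff space whose connected components are points,
  every point has arbitrarily small clopen neighbourhoods (a component is the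
  intersection of the clopen sets containing it).\<close>
lemma totally_disconnected_clopen_neighbourhood:
  assumes "locally_compact_space X" and "Hausdorff_space X" and "totally_disconnected_space X"
    and "openin X W" and "x \<in> W"
  obtains U where "openin X U" and "closedin X U" and "x \<in> U" and "U \<subseteq> W"
proof -
  have x: "x \<in> topspace X" using assms(4,5) openin_subset by blast
  have "connectedin X (connected_component_of_set X x)"
    by (rule connectedin_connected_component_of)
  then obtain a where "connected_component_of_set X x \<subseteq> {a}"
    using assms(3) unfolding totally_disconnected_space_def by blast
  moreover have "x \<in> connected_component_of_set X x"
    using x by (simp add: connected_component_of_refl)
  ultimately have "connected_component_of_set X x = {x}" by blast
  then have "{x} \<in> connected_components_of X"
    using x connected_component_in_connected_components_of by metis
  moreover have "compactin X {x}" "{x} \<subseteq> W" using x assms(5) by auto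
  ultimately obtain U V where "openin X U" "openin X V" "disjnt U V" "U \<union> V = topspace X"
      "{x} \<subseteq> U" "U \<subseteq> W"
    by (rule wilder_locally_compact_component_thm[OF assms(1,2) _ _ assms(4)])
  moreover have "U = topspace X - V"
    using \<open>disjnt U V\<close> \<open>U \<union> V = topspace X\<close> by (auto simp: disjnt_def)
  then have "closedin X U"
    using \<open>openin X V\<close> by (simp add: closedin_diff)
  ultimately show ?thesis using that by blast
qed

text \<open>A compact second countable space in which every point has arbitrarily small
  clopen neighbourhoods has a countable base of clopen sets: by compactness every
  clopen set is a finite union of basic open sets, and there are only countably
  many of those.\<close>
lemma countable_clopen_base:
  assumes "second_countable X" and "compact_space X"
    and clopen_nbhd: "\<And>W x. openin X W \<Longrightarrow> x \<in> W \<Longrightarrow>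
          \<exists>U. openin X U \<and> closedin X U \<and> x \<in> U \<and> U \<subseteq> W"
  obtains \<C> where "countable \<C>" and "\<forall>C\<in>\<C>. openin X C \<and> closedin X C"
    and "\<And>W x. openin X W \<Longrightarrow> x \<in> W \<Longrightarrow> \<exists>C\<in>\<C>. x \<in> C \<and> C \<subseteq> W"
proof -
  obtain \<B> where "countable \<B>" and \<B>_open: "\<forall>V\<in>\<B>. openin X V"
    and \<B>_base: "\<forall>U x. openin X U \<and> x \<in> U \<longrightarrow> (\<exists>V\<in>\<B>. x \<in> V \<and> V \<subseteq> U)"
    using assms(1) unfolding second_countable_def by (elim exE conjE) blast
  define \<C> where "\<C> = {C \<in> Union ` {\<F>. finite \<F> \<and> \<F> \<subseteq> \<B>}. openin X C \<and> closedin X C}"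
  have "\<C> \<subseteq> Union ` {\<F>. finite \<F> \<and> \<F> \<subseteq> \<B>}" unfolding \<C>_def by blast
  then have "countable \<C>"
    by (rule countable_subset[OF _ countable_image[OF countable_Collect_finite_subset[OF \<open>countable \<B>\<close>]]])
  moreover have finite_union: "U \<in> \<C>" if "openin X U" "closedin X U" for U
  proof -
    have "compactin X U" using that(2) assms(2) closedin_compact_space by blast
    moreover have "U \<subseteq> \<Union>{V \<in> \<B>. V \<subseteq> U}" using \<B>_base that(1) by blast
    ultimately obtain \<F> where "finite \<F>" "\<F> \<subseteq> {V \<in> \<B>. V \<subseteq> U}" "U \<subseteq> \<Union>\<F>"
      using \<B>_open conjunct2[OF \<open>compactin X U\<close>[unfolded compactin_def], rule_format,
          of "{V \<in> \<B>. V \<subseteq> U}"] by blast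
    then have "U = \<Union>\<F>" and "\<F> \<in> {\<F>. finite \<F> \<and> \<F> \<subseteq> \<B>}" by blast+
    then have "U \<in> Union ` {\<F>. finite \<F> \<and> \<F> \<subseteq> \<B>}" by blast
    then show ?thesis unfolding \<C>_def using that by blast
  qed
  moreover have "\<exists>C\<in>\<C>. x \<in> C \<and> C \<subseteq> W" if "openin X W" "x \<in> W" for W x
    using clopen_nbhd[OF that] finite_union by blast
  moreover have "\<forall>C\<in>\<C>. openin X C \<and> closedin X C" unfolding \<C>_def by blast
  ultimately show ?thesis using that by blast
qed

locale clopen_partial_action =
  fixes G :: "('g, 'm) monoid_scheme" (structure) and X :: "'a topology"
    and Xd :: "'g \<Rightarrow> 'a set" and h :: "'g \<Rightarrow> 'a \<Rightarrow> 'a"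
  assumes is_group: "group G" and partial_action: "partial_action G X Xd h"
    and clopen_domains: "\<forall>t\<in>carrier G. openin X (Xd t) \<and> closedin X (Xd t)"
begin

sublocale group G by (rule is_group)

abbreviation "S \<equiv> carrier G \<times> topspace X"
abbreviation "R \<equiv> envelope_rel G X Xd h"
abbreviation "P \<equiv> envelope_pre_topology G X"
abbreviation "E \<equiv> envelope_topology G X Xd h"

lemma domain_open: "t \<in> carrier G \<Longrightarrow> openin X (Xd t)"
  using clopen_domains by blast

lemma domain_closed: "t \<in> carrier G \<Longrightarrow> closedin X (Xd t)"
  using clopen_domains by blast

lemma domain_subset: "t \<in> carrier G \<Longrightarrow> Xd t \<subseteq> topspace X"
  using domain_open openin_subset by blast

lemmas partial_action_unfolded = partial_action[unfolded partial_action_def]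

lemma h_homeomorphic:
  "t \<in> carrier G \<Longrightarrow> homeomorphic_map (subtopology X (Xd (inv t))) (subtopology X (Xd t)) (h t)"
  using partial_action_unfolded by (elim conjE) blast

lemma domain_one: "Xd \<one> = topspace X"
  using partial_action_unfolded by (elim conjE)

lemma h_one: "x \<in> topspace X \<Longrightarrow> h \<one> x = x"
  using partial_action_unfolded by (elim conjE) blast

lemma h_image_Int:
  "s \<in> carrier G \<Longrightarrow> t \<in> carrier G \<Longrightarrow> h t ` (Xd (inv t) \<inter> Xd s) = Xd t \<inter> Xd (t \<otimes> s)"
  using partial_action_unfolded by (elim conjE) blast

lemma h_compose:
  "s \<in> carrier G \<Longrightarrow> t \<in> carrier G \<Longrightarrow> x \<in> Xd (inv s) \<Longrightarrow> x \<in> Xd (inv s \<otimes> inv t)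
    \<Longrightarrow> h t (h s x) = h (t \<otimes> s) x"
  using partial_action_unfolded by (elim conjE) blast

lemma h_image: "t \<in> carrier G \<Longrightarrow> h t ` Xd (inv t) = Xd t"
  using homeomorphic_imp_surjective_map[OF h_homeomorphic] domain_subset
  by (simp add: Int_absorb1)

lemma h_maps: "t \<in> carrier G \<Longrightarrow> x \<in> Xd (inv t) \<Longrightarrow> h t x \<in> Xd t"
  using h_image by blast

lemma h_inverse: "t \<in> carrier G \<Longrightarrow> x \<in> Xd (inv t) \<Longrightarrow> h (inv t) (h t x) = x"
proof -
  assume t: "t \<in> carrier G" and x: "x \<in> Xd (inv t)"
  then have "x \<in> topspace X" using domain_subset[of "inv t"] by auto
  then have "x \<in> Xd (inv t \<otimes> inv (inv t))" using t domain_one by simp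
  then have "h (inv t) (h t x) = h (inv t \<otimes> t) x" using h_compose[of t "inv t" x] t x by simp
  then show ?thesis using t h_one \<open>x \<in> topspace X\<close> by simp
qed

lemma h_open_image:
  assumes t: "t \<in> carrier G" and W: "openin X W"
  shows "openin X (h t ` (W \<inter> Xd (inv t)))"
proof -
  have "openin (subtopology X (Xd (inv t))) (W \<inter> Xd (inv t))"
    using W by (simp add: openin_subtopology_Int)
  then have "openin (subtopology X (Xd t)) (h t ` (W \<inter> Xd (inv t)))"
    using homeomorphic_map_openness[OF h_homeomorphic[OF t], of "W \<inter> Xd (inv t)"] openin_subset[OF W] by auto
  then show ?thesis using openin_trans_full domain_open t by blast
qed

lemma h_closed_image:
  assumes t: "t \<in> carrier G" and C: "closedin X C"
  shows "closedin X (h t ` (C \<inter> Xd (inv t)))"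
proof -
  have "closedin (subtopology X (Xd (inv t))) (C \<inter> Xd (inv t))"
    unfolding closedin_subtopology using C by blast
  then have "closedin (subtopology X (Xd t)) (h t ` (C \<inter> Xd (inv t)))"
    using homeomorphic_map_closedness[OF h_homeomorphic[OF t], of "C \<inter> Xd (inv t)"] closedin_subset[OF C] by auto
  then show ?thesis using closedin_trans_full domain_closed t by blast
qed

lemma rel_iff:
  "((r, x), (s, y)) \<in> R \<longleftrightarrow> r \<in> carrier G \<and> s \<in> carrier G \<and> x \<in> topspace X \<and> y \<in> topspace X \<and>
     x \<in> Xd (inv r \<otimes> s) \<and> h (inv s \<otimes> r) x = y"
  unfolding envelope_rel_def by simp

lemma rel_intro:
  assumes r: "r \<in> carrier G" and s: "s \<in> carrier G" and x: "x \<in> Xd (inv r \<otimes> s)"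
  shows "((r, x), (s, h (inv s \<otimes> r) x)) \<in> R"
proof -
  have "inv (inv s \<otimes> r) = inv r \<otimes> s" using r s by (simp add: inv_mult_group)
  then have "h (inv s \<otimes> r) x \<in> Xd (inv s \<otimes> r)" using h_maps[of "inv s \<otimes> r" x] r s x by simp
  then show ?thesis
    using rel_iff r s x domain_subset[of "inv r \<otimes> s"] domain_subset[of "inv s \<otimes> r"] by auto
qed

lemma rel_sym:
  assumes "((r, x), (s, y)) \<in> R"
  shows "((s, y), (r, x)) \<in> R"
proof -
  from assms have r: "r \<in> carrier G" and s: "s \<in> carrier G" and x: "x \<in> Xd (inv r \<otimes> s)"
    and y: "h (inv s \<otimes> r) x = y" and "x \<in> topspace X" "y \<in> topspace X"
    by (auto simp: rel_iff)
  have inv: "inv (inv s \<otimes> r) = inv r \<otimes> s" using r s by (simp add: inv_mult_group)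
  have "y \<in> Xd (inv s \<otimes> r)" using h_maps[of "inv s \<otimes> r" x] inv r s x y by simp
  moreover have "h (inv r \<otimes> s) y = x" using h_inverse[of "inv s \<otimes> r" x] inv r s x y by simp
  ultimately show ?thesis using r s \<open>x \<in> topspace X\<close> \<open>y \<in> topspace X\<close> by (auto simp: rel_iff)
qed

text \<open>Transitivity is where the axioms of a partial action enter: with
  \<open>a = s\<inverse>r\<close>, \<open>b = u\<inverse>s\<close>, the point \<open>h_a x\<close> lies in \<open>X_a \<inter> X_{b\<inverse>}\<close>, so \<open>x\<close> lies
  in \<open>X_{a\<inverse>} \<inter> X_{a\<inverse>b\<inverse>}\<close>, and there \<open>h_b \<circ> h_a = h_{ba}\<close>.\<close>
lemma rel_trans:
  assumes "((r, x), (s, y)) \<in> R" and "((s, y), (u, z)) \<in> R"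
  shows "((r, x), (u, z)) \<in> R"
proof -
  from assms have r: "r \<in> carrier G" and s: "s \<in> carrier G" and u: "u \<in> carrier G"
    and "x \<in> topspace X" "z \<in> topspace X"
    and x: "x \<in> Xd (inv r \<otimes> s)" and y: "h (inv s \<otimes> r) x = y"
    and y': "y \<in> Xd (inv s \<otimes> u)" and z: "h (inv u \<otimes> s) y = z"
    by (auto simp: rel_iff)
  have cancel: "s \<otimes> (inv s \<otimes> v) = v" if "v \<in> carrier G" for v
    using s that by (simp add: m_assoc[symmetric])
  define a where "a = inv s \<otimes> r"
  define b where "b = inv u \<otimes> s"
  have a: "a \<in> carrier G" "inv a = inv r \<otimes> s" using r s by (auto simp: a_def inv_mult_group)
  have b: "b \<in> carrier G" "inv b = inv s \<otimes> u" using u s by (auto simp: b_def inv_mult_group)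
  have "y \<in> Xd a" using h_maps[of a x] a x y a_def by simp
  then have "y \<in> Xd (inv (inv a)) \<inter> Xd (inv b)" using a(1) b(2) y' by simp
  then have "h (inv a) y \<in> Xd (inv a) \<inter> Xd (inv a \<otimes> inv b)"
    using h_image_Int[of "inv b" "inv a"] a b by blast
  moreover have "h (inv a) y = x" using h_inverse[of a x] a x y a_def by simp
  moreover have "inv a \<otimes> inv b = inv r \<otimes> u" using a(2) b(2) cancel r s u by (simp add: m_assoc)
  ultimately have x_dom: "x \<in> Xd (inv r \<otimes> u)" "x \<in> Xd (inv a \<otimes> inv b)" by auto
  have "b \<otimes> a = inv u \<otimes> r" using cancel r s u by (simp add: a_def b_def m_assoc)
  then have "h (inv u \<otimes> r) x = h b (h a x)" using h_compose[of a b x] a b x x_dom by simp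
  then have "h (inv u \<otimes> r) x = z" using y z a_def b_def by simp
  then show ?thesis using r u \<open>x \<in> topspace X\<close> \<open>z \<in> topspace X\<close> x_dom(1) by (simp add: rel_iff)
qed

lemma rel_equiv: "equiv S R"
proof (rule equivI)
  show "R \<subseteq> S \<times> S" unfolding envelope_rel_def by auto
  show "refl_on S R" unfolding refl_on_def by (auto simp: rel_iff domain_one h_one)
  show "sym R" unfolding sym_def using rel_sym by fast
  show "trans R" unfolding trans_def using rel_trans by fast
qed

lemma openin_envelope_quotient:
  "openin E U \<longleftrightarrow> U \<subseteq> S // R \<and> openin P {p \<in> S. R``{p} \<in> U}"
proof -
  have "istopology (\<lambda>U. U \<subseteq> S // R \<and> openin P {p \<in> S. R``{p} \<in> U})"
    unfolding istopology_def
  proof (rule conjI; intro allI impI)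
    fix U V
    assume "U \<subseteq> S // R \<and> openin P {p \<in> S. R``{p} \<in> U}"
      and "V \<subseteq> S // R \<and> openin P {p \<in> S. R``{p} \<in> V}"
    moreover have "{p \<in> S. R``{p} \<in> U \<inter> V} = {p \<in> S. R``{p} \<in> U} \<inter> {p \<in> S. R``{p} \<in> V}"
      by auto
    ultimately show "U \<inter> V \<subseteq> S // R \<and> openin P {p \<in> S. R``{p} \<in> U \<inter> V}" by auto
  next
    fix \<K> assume \<K>: "\<forall>U\<in>\<K>. U \<subseteq> S // R \<and> openin P {p \<in> S. R``{p} \<in> U}"
    have "{p \<in> S. R``{p} \<in> \<Union>\<K>} = (\<Union>U\<in>\<K>. {p \<in> S. R``{p} \<in> U})" by auto
    then show "\<Union>\<K> \<subseteq> S // R \<and> openin P {p \<in> S. R``{p} \<in> \<Union>\<K>}" using \<K> by auto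
  qed
  then show ?thesis unfolding envelope_topology_def by simp
qed

lemma topspace_envelope: "topspace E = S // R"
proof -
  have "{p \<in> S. R``{p} \<in> S // R} = S" by (auto intro: quotientI)
  then have "openin E (S // R)"
    using openin_envelope_quotient openin_topspace[of P]
    by (simp add: envelope_pre_topology_def)
  then show ?thesis using openin_subset openin_envelope_quotient[of "topspace E"] by blast
qed

lemma openin_pre_topology_iff:
  assumes "A \<subseteq> S"
  shows "openin P A \<longleftrightarrow> (\<forall>s\<in>carrier G. openin X {y. (s, y) \<in> A})"
proof
  assume A: "openin P A"
  show "\<forall>s\<in>carrier G. openin X {y. (s, y) \<in> A}"
  proof
    fix s assume s: "s \<in> carrier G"
    then have "continuous_map X P (\<lambda>y. (s, y))"
      unfolding envelope_pre_topology_def by (simp add: continuous_map_paired)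
    then have "openin X {y \<in> topspace X. (s, y) \<in> A}"
      using openin_continuous_map_preimage A by blast
    moreover have "{y \<in> topspace X. (s, y) \<in> A} = {y. (s, y) \<in> A}" using assms by blast
    ultimately show "openin X {y. (s, y) \<in> A}" by simp
  qed
next
  assume slices: "\<forall>s\<in>carrier G. openin X {y. (s, y) \<in> A}"
  have "openin P ({s} \<times> {y. (s, y) \<in> A})" if "s \<in> carrier G" for s
    unfolding envelope_pre_topology_def using slices that by (simp add: openin_prod_Times_iff)
  then have "openin P (\<Union>s\<in>carrier G. {s} \<times> {y. (s, y) \<in> A})"
    by (intro openin_Union) blast
  moreover have "A = (\<Union>s\<in>carrier G. {s} \<times> {y. (s, y) \<in> A})" using assms by auto
  ultimately show "openin P A" by simp
qed

definition incl :: "'g \<Rightarrow> 'a \<Rightarrow> ('g \<times> 'a) set" where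
  "incl g x = R `` {(g, x)}"

lemma incl_in: "g \<in> carrier G \<Longrightarrow> x \<in> topspace X \<Longrightarrow> incl g x \<in> topspace E"
  unfolding incl_def topspace_envelope by (simp add: quotientI)

lemma incl_cases:
  assumes "z \<in> topspace E"
  obtains g x where "g \<in> carrier G" and "x \<in> topspace X" and "z = incl g x"
  using assms that unfolding topspace_envelope incl_def by (auto elim!: quotientE)

lemma incl_eq_iff:
  assumes "g \<in> carrier G" "x \<in> topspace X" "s \<in> carrier G" "y \<in> topspace X"
  shows "incl g x = incl s y \<longleftrightarrow> x \<in> Xd (inv g \<otimes> s) \<and> h (inv s \<otimes> g) x = y"
  using eq_equiv_class_iff[OF rel_equiv] assms unfolding incl_def by (simp add: rel_iff)

lemma incl_inj: "g \<in> carrier G \<Longrightarrow> x \<in> topspace X \<Longrightarrow> y \<in> topspace X \<Longrightarrow> incl g x = incl g y \<Longrightarrow> x = y"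
  using incl_eq_iff[of g x g y] by (simp add: h_one)

lemma openin_envelope:
  "openin E U \<longleftrightarrow> U \<subseteq> topspace E \<and> (\<forall>s\<in>carrier G. openin X {y \<in> topspace X. incl s y \<in> U})"
proof -
  have "{p \<in> S. R``{p} \<in> U} \<subseteq> S" by blast
  moreover have "{y. (s, y) \<in> {p \<in> S. R``{p} \<in> U}} = {y \<in> topspace X. incl s y \<in> U}"
    if "s \<in> carrier G" for s
    using that unfolding incl_def by auto
  ultimately show ?thesis
    by (simp add: openin_envelope_quotient topspace_envelope openin_pre_topology_iff)
qed

lemma closedin_envelope:
  "closedin E U \<longleftrightarrow> U \<subseteq> topspace E \<and> (\<forall>s\<in>carrier G. closedin X {y \<in> topspace X. incl s y \<in> U})"
proof -
  have "{y \<in> topspace X. incl s y \<in> topspace E - U} = topspace X - {y \<in> topspace X. incl s y \<in> U}"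
    if "s \<in> carrier G" for s
    using incl_in[OF that] by auto
  then show ?thesis
    unfolding closedin_def[of E] openin_envelope closedin_def[of X] by auto
qed

lemma continuous_map_incl: "g \<in> carrier G \<Longrightarrow> continuous_map X E (incl g)"
  unfolding continuous_map_def using incl_in openin_envelope by auto

lemma preimage_incl_image:
  assumes W: "W \<subseteq> topspace X" and g: "g \<in> carrier G" and s: "s \<in> carrier G"
  shows "{y \<in> topspace X. incl s y \<in> incl g ` W} = h (inv s \<otimes> g) ` (W \<inter> Xd (inv g \<otimes> s))"
proof -
  have inv: "inv (inv s \<otimes> g) = inv g \<otimes> s" using g s by (simp add: inv_mult_group)
  have "incl s y = incl g w \<longleftrightarrow> w \<in> Xd (inv g \<otimes> s) \<and> h (inv s \<otimes> g) w = y"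
    if "y \<in> topspace X" "w \<in> W" for y w
    using incl_eq_iff[of g w s y] g s that W by auto
  moreover have "h (inv s \<otimes> g) w \<in> topspace X" if "w \<in> Xd (inv g \<otimes> s)" for w
    using h_maps[of "inv s \<otimes> g" w] domain_subset[of "inv s \<otimes> g"] inv that g s by auto
  ultimately show ?thesis by auto
qed

lemma openin_incl_image:
  assumes g: "g \<in> carrier G" and W: "openin X W"
  shows "openin E (incl g ` W)"
  unfolding openin_envelope
proof
  have "W \<subseteq> topspace X" using W openin_subset by blast
  then show "incl g ` W \<subseteq> topspace E" using g incl_in by auto
  show "\<forall>s\<in>carrier G. openin X {y \<in> topspace X. incl s y \<in> incl g ` W}"
  proof
    fix s assume s: "s \<in> carrier G"
    have "inv (inv s \<otimes> g) = inv g \<otimes> s" using g s by (simp add: inv_mult_group)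
    then show "openin X {y \<in> topspace X. incl s y \<in> incl g ` W}"
      using preimage_incl_image[OF \<open>W \<subseteq> topspace X\<close> g s] h_open_image[OF _ W, of "inv s \<otimes> g"] g s
      by simp
  qed
qed

lemma closedin_incl_image:
  assumes g: "g \<in> carrier G" and C: "closedin X C"
  shows "closedin E (incl g ` C)"
  unfolding closedin_envelope
proof
  have "C \<subseteq> topspace X" using C closedin_subset by blast
  then show "incl g ` C \<subseteq> topspace E" using g incl_in by auto
  show "\<forall>s\<in>carrier G. closedin X {y \<in> topspace X. incl s y \<in> incl g ` C}"
  proof
    fix s assume s: "s \<in> carrier G"
    have "inv (inv s \<otimes> g) = inv g \<otimes> s" using g s by (simp add: inv_mult_group)
    then show "closedin X {y \<in> topspace X. incl s y \<in> incl g ` C}"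
      using preimage_incl_image[OF \<open>C \<subseteq> topspace X\<close> g s] h_closed_image[OF _ C, of "inv s \<otimes> g"] g s
      by simp
  qed
qed

text \<open>Hausdorff: two classes \<open>[r, x] \<noteq> [s, y]\<close> are either both represented in the
  copy \<open>\<iota>_s(X)\<close>, and are separated there, or \<open>x \<notin> X_{r\<inverse>s}\<close>, and then the open sets
  \<open>\<iota>_r(X - X_{r\<inverse>s})\<close> and \<open>\<iota>_s(X)\<close> are disjoint.\<close>
lemma Hausdorff_envelope:
  assumes "Hausdorff_space X"
  shows "Hausdorff_space E"
  unfolding Hausdorff_space_def
proof (intro allI impI)
  fix z1 z2 assume z: "z1 \<in> topspace E \<and> z2 \<in> topspace E \<and> z1 \<noteq> z2"
  obtain r x where r: "r \<in> carrier G" and x: "x \<in> topspace X" and z1: "z1 = incl r x"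
    using z incl_cases by blast
  obtain s y where s: "s \<in> carrier G" and y: "y \<in> topspace X" and z2: "z2 = incl s y"
    using z incl_cases by blast
  show "\<exists>U V. openin E U \<and> openin E V \<and> z1 \<in> U \<and> z2 \<in> V \<and> disjnt U V"
  proof (cases "x \<in> Xd (inv r \<otimes> s)")
    case True
    define x' where "x' = h (inv s \<otimes> r) x"
    have "((r, x), (s, x')) \<in> R" unfolding x'_def using rel_intro r s True .
    then have x': "x' \<in> topspace X" by (simp add: rel_iff)
    have z1': "z1 = incl s x'" using incl_eq_iff[OF r x s x'] True z1 x'_def by simp
    then have "x' \<noteq> y" using z z2 by auto
    then obtain U V where UV: "openin X U" "openin X V" "x' \<in> U" "y \<in> V" "disjnt U V"
      using assms x' y unfolding Hausdorff_space_def by blast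
    then have "disjnt (incl s ` U) (incl s ` V)"
      using incl_inj[OF s] openin_subset unfolding disjnt_def by blast
    then show ?thesis
      using openin_incl_image[OF s] UV z1' z2 by blast
  next
    case False
    have "disjnt (incl r ` (topspace X - Xd (inv r \<otimes> s))) (incl s ` topspace X)"
      using incl_eq_iff[OF r _ s] unfolding disjnt_def by blast
    moreover have "openin X (topspace X - Xd (inv r \<otimes> s))"
      using domain_closed r s by blast
    moreover have "z1 \<in> incl r ` (topspace X - Xd (inv r \<otimes> s))" "z2 \<in> incl s ` topspace X"
      using False x y z1 z2 by auto
    ultimately show ?thesis
      using openin_incl_image[OF r] openin_incl_image[OF s openin_topspace] by blast
  qed
qed

text \<open>Local compactness: \<open>\<iota>_g(X)\<close> is a compact open neighbourhood of \<open>[g, x]\<close>.\<close>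
lemma locally_compact_envelope:
  assumes "compact_space X"
  shows "locally_compact_space E"
  unfolding locally_compact_space_def
proof
  fix z assume "z \<in> topspace E"
  then obtain g x where g: "g \<in> carrier G" and "x \<in> topspace X" and "z = incl g x"
    using incl_cases by blast
  moreover have "compactin E (incl g ` topspace X)"
    using image_compactin assms continuous_map_incl[OF g] unfolding compact_space_def by blast
  moreover have "openin E (incl g ` topspace X)" using openin_incl_image g by blast
  ultimately show "\<exists>U K. openin E U \<and> compactin E K \<and> z \<in> U \<and> U \<subseteq> K" by blast
qed

text \<open>No isolated points: if \<open>{[g, x]}\<close> were open, then so would be its preimage \<open>{x}\<close>
  under the continuous injection \<open>\<iota>_g\<close>.\<close>
lemma no_isolated_points_envelope:
  assumes "\<forall>x\<in>topspace X. \<not> openin X {x}"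
  shows "\<forall>z\<in>topspace E. \<not> openin E {z}"
proof (intro ballI notI)
  fix z assume "z \<in> topspace E" and "openin E {z}"
  obtain g x where g: "g \<in> carrier G" and x: "x \<in> topspace X" and z: "z = incl g x"
    using \<open>z \<in> topspace E\<close> incl_cases by blast
  have "openin X {y \<in> topspace X. incl g y \<in> {z}}"
    using openin_continuous_map_preimage[OF continuous_map_incl[OF g] \<open>openin E {z}\<close>] .
  moreover have "{y \<in> topspace X. incl g y \<in> {z}} = {x}"
    using incl_inj[OF g x] x z by auto
  ultimately show False using assms x by simp
qed

text \<open>A countable clopen base of \<open>X\<close> transported along the countably many maps \<open>\<iota>_g\<close>
  gives a countable clopen base of the envelope.\<close>
lemma clopen_base_envelope:
  assumes "countable (carrier G)" and "countable \<C>"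
    and \<C>_clopen: "\<forall>C\<in>\<C>. openin X C \<and> closedin X C"
    and \<C>_base: "\<And>W x. openin X W \<Longrightarrow> x \<in> W \<Longrightarrow> \<exists>C\<in>\<C>. x \<in> C \<and> C \<subseteq> W"
  shows "\<exists>B. countable B \<and> (\<forall>U\<in>B. openin E U \<and> closedin E U) \<and>
              (\<forall>U. openin E U \<longrightarrow> (\<exists>B'\<subseteq>B. \<Union>B' = U))"
proof (intro exI conjI)
  define B where "B = (\<lambda>(g, C). incl g ` C) ` (carrier G \<times> \<C>)"
  show "countable B" unfolding B_def using assms(1,2) by (intro countable_image countable_SIGMA)
  show "\<forall>U\<in>B. openin E U \<and> closedin E U"
    unfolding B_def using \<C>_clopen openin_incl_image closedin_incl_image by auto
  show "\<forall>U. openin E U \<longrightarrow> (\<exists>B'\<subseteq>B. \<Union>B' = U)"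
  proof (intro allI impI)
    fix U assume U: "openin E U"
    have "z \<in> \<Union>{V \<in> B. V \<subseteq> U}" if "z \<in> U" for z
    proof -
      obtain g x where g: "g \<in> carrier G" and "x \<in> topspace X" and z: "z = incl g x"
        using \<open>z \<in> U\<close> U openin_subset incl_cases by blast
      have "openin X {y \<in> topspace X. incl g y \<in> U}"
        using openin_continuous_map_preimage[OF continuous_map_incl[OF g] U] .
      moreover have "x \<in> {y \<in> topspace X. incl g y \<in> U}" using \<open>x \<in> topspace X\<close> z \<open>z \<in> U\<close> by simp
      ultimately obtain C where "C \<in> \<C>" "x \<in> C" "C \<subseteq> {y \<in> topspace X. incl g y \<in> U}"
        using \<C>_base by blast
      have "incl g ` C \<in> B" unfolding B_def using g \<open>C \<in> \<C>\<close> by force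
      moreover have "incl g ` C \<subseteq> U" using \<open>C \<subseteq> _\<close> by blast
      ultimately show ?thesis using z \<open>x \<in> C\<close> by blast
    qed
    then have "\<Union>{V \<in> B. V \<subseteq> U} = U" by (intro equalityI subsetI) auto
    then show "\<exists>B'\<subseteq>B. \<Union>B' = U" by (intro exI[of _ "{V \<in> B. V \<subseteq> U}"]) auto
  qed
qed

end

theorem proposition3p2:
  fixes G :: "('g, 'm) monoid_scheme" and X :: "'a topology"
    and Xd :: "'g \<Rightarrow> 'a set" and h :: "'g \<Rightarrow> 'a \<Rightarrow> 'a"
  assumes "group G" and "countable (carrier G)"
    and "metrizable_space X" and "compact_space X" and "topspace X \<noteq> {}"
    and "totally_disconnected_space X"
    and "\<forall>x\<in>topspace X. \<not> openin X {x}"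
    and "partial_action G X Xd h"
    and "\<forall>t\<in>carrier G. openin X (Xd t) \<and> closedin X (Xd t)"
  shows "Hausdorff_space (envelope_topology G X Xd h) \<and>
         locally_compact_space (envelope_topology G X Xd h) \<and>
         (\<exists>B. countable B \<and>
              (\<forall>U\<in>B. openin (envelope_topology G X Xd h) U \<and> closedin (envelope_topology G X Xd h) U) \<and>
              (\<forall>U. openin (envelope_topology G X Xd h) U \<longrightarrow> (\<exists>B'\<subseteq>B. \<Union>B' = U))) \<and>
         (\<forall>z\<in>topspace (envelope_topology G X Xd h). \<not> openin (envelope_topology G X Xd h) {z})"
proof -
  interpret clopen_partial_action G X Xd h
    using assms(1,8,9) by (rule clopen_partial_action.intro)
  have "Hausdorff_space X" using assms(3) by (rule metrizable_imp_Hausdorff_space)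
  have "locally_compact_space X" using assms(4) by (rule compact_imp_locally_compact_space)
  obtain \<C> where \<C>: "countable \<C>" "\<forall>C\<in>\<C>. openin X C \<and> closedin X C"
      "\<And>W x. openin X W \<Longrightarrow> x \<in> W \<Longrightarrow> \<exists>C\<in>\<C>. x \<in> C \<and> C \<subseteq> W"
  proof (rule countable_clopen_base[OF compact_metrizable_imp_second_countable[OF assms(3,4)] assms(4)])
    fix W x assume "openin X W" "x \<in> W"
    then obtain U where "openin X U" "closedin X U" "x \<in> U" "U \<subseteq> W"
      using totally_disconnected_clopen_neighbourhood[OF \<open>locally_compact_space X\<close>
          \<open>Hausdorff_space X\<close> assms(6)] by blast
    then show "\<exists>U. openin X U \<and> closedin X U \<and> x \<in> U \<and> U \<subseteq> W" by blast
  qed (rule that)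
  show ?thesis
    using Hausdorff_envelope[OF \<open>Hausdorff_space X\<close>] locally_compact_envelope[OF assms(4)]
      clopen_base_envelope[OF assms(2) \<C>] no_isolated_points_envelope[OF assms(7)]
    by blast
qed

end
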